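(* Let $d\ge2$ and let $E\subset C(\mathbb{R}^d)$ be a complex linear subspace of finite dimension $\ell$ such that for every $a\in\mathbb{R}^d$ the space $E_a:=\{x\mapsto f(x+a): f\in E\}$ is $\mathrm{SO}(d)$-invariant (i.e. $g\in E_a$, $U\in\mathrm{SO}(d)$ imply $x\mapsto g(U^{-1}x)$ belongs to $E_a$). Then every element of $E$ is a polynomial of degree at most $d\ell$.
   Context: $C(\mathbb{R}^d)$ denotes the space of continuous complex-valued functions on $\mathbb{R}^d$. *)

theory Defs
  imports "HOL-Analysis.Analysis"
begin

definition csubspace_fun :: "('a \<Rightarrow> complex) set \<Rightarrow> bool" where
  "csubspace_fun E \<longleftrightarrow> (\<lambda>x. 0) \<in> E \<and> (\<forall>f\<in>E. \<forall>g\<in>E. (\<lambda>x. f x + g x) \<in> E)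
      \<and> (\<forall>c::complex. \<forall>f\<in>E. (\<lambda>x. c * f x) \<in> E)"

definition cspan_fun :: "('a \<Rightarrow> complex) set \<Rightarrow> ('a \<Rightarrow> complex) set" where
  "cspan_fun B = {f. \<exists>c::('a \<Rightarrow> complex) \<Rightarrow> complex. f = (\<lambda>x. \<Sum>b\<in>B. c b * b x)}"

definition cindep_fun :: "('a \<Rightarrow> complex) set \<Rightarrow> bool" where
  "cindep_fun B \<longleftrightarrow> (\<forall>c::('a \<Rightarrow> complex) \<Rightarrow> complex.
      (\<forall>x. (\<Sum>b\<in>B. c b * b x) = 0) \<longrightarrow> (\<forall>b\<in>B. c b = 0))"

definition cdim_fun :: "('a \<Rightarrow> complex) set \<Rightarrow> nat \<Rightarrow> bool" where
  "cdim_fun E l \<longleftrightarrow> (\<exists>B. finite B \<and> card B = l \<and> B \<subseteq> E \<and> cindep_fun B \<and> cspan_fun B = E)"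

definition poly_fun_deg :: "nat \<Rightarrow> (real^'n \<Rightarrow> complex) \<Rightarrow> bool" where
  "poly_fun_deg N f \<longleftrightarrow> (\<exists>c::('n \<Rightarrow> nat) \<Rightarrow> complex. \<forall>x.
      f x = (\<Sum>\<alpha>\<in>{\<alpha>. (\<Sum>i\<in>UNIV. \<alpha> i) \<le> N}. c \<alpha> * (\<Prod>i\<in>UNIV. complex_of_real (x$i ^ \<alpha> i))))"

definition translate_set :: "real^'n \<Rightarrow> (real^'n \<Rightarrow> complex) set \<Rightarrow> (real^'n \<Rightarrow> complex) set" where
  "translate_set a E = (\<lambda>f x. f (x + a)) ` E"

end

theory Submission
  imports Defs "HOL-Computational_Algebra.Fundamental_Theorem_Algebra" "HOL-Library.Function_Algebras"
begin

(* Translations T_a act on the finite-dimensional space E. A common eigenvector of all T_a,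
   normalised at 0, is a continuous character of (R^d, +) lying in E. Its rotates are again
   characters in E, and distinct characters are linearly independent, so it has only finitely
   many rotates; being continuous, it is then constant on the connected spheres (d >= 2), hence
   even, and so equal to 1 since gamma x = gamma (x/2)^2 = gamma (x/2) gamma (-x/2) = 1. Thus 1 is the
   only eigenvalue of every T_a on E, and (T_a - 1)^l vanishes on E. A continuous function killed
   by all l-th forward differences is a polynomial of degree < l (Frechet), so every f in E is a
   polynomial of degree < l in each coordinate separately, and tensor-product Lagrange
   interpolation on the grid {0..l-1}^d exhibits it as a polynomial of total degree at most d l.
   Invariance of E itself under translations comes from applying to E_c a rotation sending c
   to -c. *)

section \<open>Forward differences and Lagrange interpolation\<close>

definition fdiff :: "'a::plus \<Rightarrow> ('a \<Rightarrow> 'b::ab_group_add) \<Rightarrow> 'a \<Rightarrow> 'b" where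
  "fdiff h f = (\<lambda>x. f (x + h) - f x)"

lemma fdiff_pow_compose:
  assumes "\<And>x. \<rho> (x + h) = \<rho> x + h'"
  shows "(fdiff h ^^ n) (\<lambda>x. f (\<rho> x)) = (\<lambda>x. (fdiff h' ^^ n) f (\<rho> x))"
  by (induction n) (simp_all add: fdiff_def assms)

lemma fdiff_pow_diff:
  "(fdiff h ^^ n) (\<lambda>x. f x - g x) = (\<lambda>x. (fdiff h ^^ n) f x - (fdiff h ^^ n) g x)"
  by (induction n) (simp_all add: fdiff_def algebra_simps)

lemma degree_shift_diff_less:
  fixes q :: "'a::idom poly"
  assumes "degree q > 0"
  shows "degree (q \<circ>\<^sub>p [:h, 1:] - q) < degree q"
proof -
  let ?r = "q \<circ>\<^sub>p [:h, 1:] - q"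
  have deg: "degree (q \<circ>\<^sub>p [:h, 1:]) = degree q"
    by (simp add: degree_pcompose)
  have lead: "lead_coeff (q \<circ>\<^sub>p [:h, 1:]) = lead_coeff q"
    by (simp add: lead_coeff_comp)
  have "degree ?r \<le> degree q"
    by (rule degree_diff_le) (simp_all add: deg)
  moreover have "coeff ?r (degree q) = 0"
    using deg lead by simp
  ultimately show ?thesis
    using assms by (metis le_neq_implies_less leading_coeff_0_iff degree_0)
qed

lemma fdiff_pow_poly:
  fixes q :: "'a::{idom, ab_group_add} poly"
  assumes "degree q < n \<or> q = 0"
  shows "(fdiff h ^^ n) (poly q) = (\<lambda>z. 0)"
  using assms
proof (induction n arbitrary: q)
  case (Suc n)
  have "fdiff h (poly q) = poly (q \<circ>\<^sub>p [:h, 1:] - q)"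
    by (simp add: fdiff_def fun_eq_iff poly_pcompose algebra_simps)
  moreover have "degree (q \<circ>\<^sub>p [:h, 1:] - q) < n \<or> q \<circ>\<^sub>p [:h, 1:] - q = 0"
  proof (cases "degree q = 0")
    case True
    then show ?thesis by (auto elim: degree_eq_zeroE)
  next
    case False
    then show ?thesis using degree_shift_diff_less[of q h] Suc.prems by auto
  qed
  ultimately show ?case
    using Suc.IH by (simp add: funpow_Suc_right del: funpow.simps)
qed (simp add: fun_eq_iff)

definition lagrange_basis :: "nat \<Rightarrow> nat \<Rightarrow> 'a::field_char_0 poly" where
  "lagrange_basis n i = smult (inverse (\<Prod>j\<in>{..<n}-{i}. of_nat i - of_nat j))
                                (\<Prod>j\<in>{..<n}-{i}. [:- of_nat j, 1:])"

definition interpolant :: "nat \<Rightarrow> (nat \<Rightarrow> 'a::field_char_0) \<Rightarrow> 'a poly" where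
  "interpolant n v = (\<Sum>i<n. smult (v i) (lagrange_basis n i))"

lemma poly_lagrange_basis:
  assumes "i < n" "j < n"
  shows "poly (lagrange_basis n i) (of_nat j :: 'a::field_char_0) = (if i = j then 1 else 0)"
proof (cases "i = j")
  case True
  have "(\<Prod>k\<in>{..<n}-{i}. of_nat i - of_nat k :: 'a) \<noteq> 0"
    by (subst prod_zero_iff) auto
  then show ?thesis using True by (simp add: lagrange_basis_def poly_prod)
next
  case False
  have "(\<Prod>k\<in>{..<n}-{i}. poly [:- of_nat k, 1:] (of_nat j :: 'a)) = 0"
    using False assms by (subst prod_zero_iff) auto
  then show ?thesis using False by (simp add: lagrange_basis_def poly_prod)
qed

lemma degree_lagrange_basis:
  assumes "i < n"
  shows "degree (lagrange_basis n i :: 'a::field_char_0 poly) < n"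
proof -
  have "degree (\<Prod>j\<in>{..<n}-{i}. [:- of_nat j, 1:] :: 'a poly)
      \<le> (\<Sum>j\<in>{..<n}-{i}. degree ([:- of_nat j, 1:] :: 'a poly))"
    using degree_prod_sum_le[of "{..<n}-{i}" "\<lambda>j. [:- of_nat j, 1:] :: 'a poly"] by (simp add: o_def)
  also have "\<dots> < n" using assms by simp
  finally show ?thesis unfolding lagrange_basis_def by (meson degree_smult_le le_less_trans)
qed

lemma degree_interpolant: "degree (interpolant n v) < n \<or> interpolant n v = 0"
proof (cases "n = 0")
  case False
  then show ?thesis
    unfolding interpolant_def by (intro disjI1 degree_sum_less) (auto simp: degree_lagrange_basis)
qed (simp add: interpolant_def)

lemma poly_interpolant_nodes:
  assumes "j < n"
  shows "poly (interpolant n v) (of_nat j) = v j"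
  using assms by (simp add: interpolant_def poly_sum poly_lagrange_basis if_distrib cong: if_cong)

lemma poly_interpolant: "poly (interpolant n v) x = (\<Sum>i<n. v i * poly (lagrange_basis n i) x)"
  by (simp add: interpolant_def poly_sum)

lemma int_fdiff_pow_eq_0_imp_zero:
  fixes s :: "int \<Rightarrow> 'a::ab_group_add"
  assumes "(fdiff 1 ^^ n) s = (\<lambda>k. 0)" "\<And>i. i < n \<Longrightarrow> s (int i) = 0"
  shows "s = (\<lambda>k. 0)"
  using assms
proof (induction n arbitrary: s)
  case (Suc n)
  have "(fdiff 1 ^^ n) (fdiff 1 s) = (\<lambda>k. 0)"
    using Suc.prems(1) by (simp add: funpow_Suc_right del: funpow.simps)
  moreover have "fdiff 1 s (int i) = 0" if "i < n" for i
    using Suc.prems(2)[of i] Suc.prems(2)[of "Suc i"] that by (simp add: fdiff_def add.commute)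
  ultimately have "fdiff 1 s = (\<lambda>k. 0)" by (rule Suc.IH)
  then have step: "s (k + 1) = s k" for k
    by (simp add: fdiff_def fun_eq_iff)
  have "s k = s 0" for k
  proof (induction k rule: int_induct[where k = 0])
    case (step2 i)
    then show ?case using step[of "i - 1"] by simp
  qed (simp_all add: step)
  then show ?case using Suc.prems(2)[of 0] by auto
qed (simp add: fun_eq_iff)

lemma int_fdiff_pow_eq_0_imp_poly:
  fixes s :: "int \<Rightarrow> complex"
  assumes "(fdiff 1 ^^ n) s = (\<lambda>k. 0)"
  shows "s k = poly (interpolant n (\<lambda>i. s (int i))) (of_int k)"
proof -
  let ?q = "interpolant n (\<lambda>i. s (int i))"
  have "(fdiff 1 ^^ n) (\<lambda>k::int. poly ?q (of_int k)) = (\<lambda>k. (fdiff 1 ^^ n) (poly ?q) (of_int k))"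
    by (rule fdiff_pow_compose) simp
  then have "(fdiff 1 ^^ n) (\<lambda>k::int. poly ?q (of_int k)) = (\<lambda>k. 0)"
    by (simp only: fdiff_pow_poly[OF degree_interpolant])
  then have "(fdiff 1 ^^ n) (\<lambda>k. s k - poly ?q (of_int k)) = (\<lambda>k. 0)"
    by (simp only: fdiff_pow_diff assms diff_self)
  then have "(\<lambda>k. s k - poly ?q (of_int k)) = (\<lambda>k. 0)"
    by (rule int_fdiff_pow_eq_0_imp_zero) (simp add: poly_interpolant_nodes)
  then show ?thesis by (metis right_minus_eq)
qed

lemma poly_eqI_infinite:
  fixes p q :: "'a::idom poly"
  assumes "infinite {x. poly p x = poly q x}"
  shows "p = q"
proof (rule ccontr)
  assume "p \<noteq> q"
  then have "finite {x. poly (p - q) x = 0}" by (intro poly_roots_finite) simp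
  with assms show False by simp
qed

lemma continuous_eq_on_dyadics:
  fixes f g :: "real \<Rightarrow> 'a::t2_space"
  assumes "continuous_on UNIV f" "continuous_on UNIV g"
    and "\<And>k m. f (of_int k / 2^m) = g (of_int k / 2^m)"
  shows "f t = g t"
proof -
  let ?D = "\<Union>k. \<Union>h\<in>Basis \<rightarrow> \<int>. {\<Sum>i\<in>Basis. (h i / 2^k) *\<^sub>R i} :: real set"
  have "?D \<subseteq> {t. f t = g t}"
  proof clarify
    fix k :: nat and h :: "real \<Rightarrow> real" assume "h \<in> Basis \<rightarrow> \<int>"
    then obtain z where "h 1 = of_int z" by (auto elim: Ints_cases)
    then show "f (\<Sum>i\<in>Basis. (h i / 2^k) *\<^sub>R i) = g (\<Sum>i\<in>Basis. (h i / 2^k) *\<^sub>R i)"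
      using assms(3)[of z k] by simp
  qed
  moreover have "closed {t. f t = g t}" using assms(1,2) by (rule closed_Collect_eq)
  ultimately have "closure ?D \<subseteq> {t. f t = g t}" by (rule closure_minimal)
  then show ?thesis unfolding closure_dyadic_rationals by blast
qed

lemma fdiff_pow_eq_0_imp_poly:
  fixes \<psi> :: "real \<Rightarrow> complex"
  assumes cont: "continuous_on UNIV \<psi>"
    and fdiff: "\<And>h. (fdiff h ^^ n) \<psi> = (\<lambda>t. 0)"
  shows "\<psi> t = poly (interpolant n (\<lambda>i. \<psi> (real i))) (of_real t)"
proof -
  let ?q = "interpolant n (\<lambda>i. \<psi> (real i))"
  have on_integers: "\<psi> (of_int k) = poly ?q (of_int k)" for k
  proof -
    have "(fdiff 1 ^^ n) (\<lambda>k::int. \<psi> (of_int k)) = (\<lambda>k. (fdiff 1 ^^ n) \<psi> (of_int k))"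
      by (rule fdiff_pow_compose) simp
    then have "(fdiff 1 ^^ n) (\<lambda>k::int. \<psi> (of_int k)) = (\<lambda>k. 0)"
      by (simp add: fdiff)
    from int_fdiff_pow_eq_0_imp_poly[OF this] show ?thesis by simp
  qed
  \<comment> \<open>On \<open>2\<^sup>-\<^sup>m \<int>\<close>, \<open>\<psi>\<close> is again a polynomial, which agrees with \<open>q\<close> because both agree at the integers.\<close>
  have on_dyadics: "\<psi> (of_int k / 2^m) = poly ?q (of_real (of_int k / 2^m))" for k m
  proof -
    have "(fdiff 1 ^^ n) (\<lambda>k::int. \<psi> (of_int k / 2^m))
        = (\<lambda>k. (fdiff (1 / 2^m) ^^ n) \<psi> (of_int k / 2^m))"
      by (rule fdiff_pow_compose) (simp add: add_divide_distrib)
    then have "(fdiff 1 ^^ n) (\<lambda>k::int. \<psi> (of_int k / 2^m)) = (\<lambda>k. 0)"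
      by (simp add: fdiff)
    then obtain r where r: "\<And>k. \<psi> (of_int k / 2^m) = poly r (of_int k)"
      using int_fdiff_pow_eq_0_imp_poly by blast
    have "r = ?q \<circ>\<^sub>p [:0, 1 / 2^m:]"
    proof (rule poly_eqI_infinite)
      have "poly r (of_nat (2^m * j)) = poly (?q \<circ>\<^sub>p [:0, 1 / 2^m:]) (of_nat (2^m * j))" for j
        using r[of "int (2^m * j)"] on_integers[of "int j"] by (simp add: poly_pcompose)
      then have "range (\<lambda>j. of_nat (2^m * j)) \<subseteq> {x. poly r x = poly (?q \<circ>\<^sub>p [:0, 1 / 2^m:]) x}"
        by auto
      moreover have "infinite (range (\<lambda>j::nat. of_nat (2^m * j) :: complex))"
        by (rule range_inj_infinite) (simp add: inj_def)
      ultimately show "infinite {x. poly r x = poly (?q \<circ>\<^sub>p [:0, 1 / 2^m:]) x}"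
        using infinite_super by blast
    qed
    then show ?thesis using r[of k] by (simp add: poly_pcompose)
  qed
  show ?thesis
    by (rule continuous_eq_on_dyadics[of \<psi> "\<lambda>t. poly ?q (of_real t)", OF cont _ on_dyadics])
       (intro continuous_intros)
qed

section \<open>Polynomials in a translation operator\<close>

interpretation cfun: vector_space "\<lambda>(c::complex) (f::'a \<Rightarrow> complex) x. c * f x"
  by unfold_locales (auto simp: algebra_simps fun_eq_iff)

lemma sum_fun_apply: "(sum f A) x = (\<Sum>a\<in>A. f a x)"
  by (induction A rule: infinite_finite_induct) auto

definition shift_invariant :: "'a::plus \<Rightarrow> ('a \<Rightarrow> 'b) set \<Rightarrow> bool" where
  "shift_invariant b K \<longleftrightarrow> (\<forall>h\<in>K. (\<lambda>x. h (x + b)) \<in> K)"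

definition shift_eigenspace :: "'a::plus \<Rightarrow> complex \<Rightarrow> ('a \<Rightarrow> complex) set \<Rightarrow> ('a \<Rightarrow> complex) set" where
  "shift_eigenspace b \<mu> K = {h\<in>K. \<forall>x. h (x + b) = \<mu> * h x}"

lemma subspace_shift_eigenspace:
  "cfun.subspace K \<Longrightarrow> cfun.subspace (shift_eigenspace b \<mu> K)"
  unfolding shift_eigenspace_def cfun.subspace_def by (auto simp: algebra_simps)

lemma shift_invariant_shift_eigenspace:
  fixes b c :: "'a::ab_semigroup_add"
  assumes "shift_invariant c K"
  shows "shift_invariant c (shift_eigenspace b \<mu> K)"
  unfolding shift_invariant_def shift_eigenspace_def
proof clarify
  fix h assume "h \<in> K" and eigen: "\<forall>x. h (x + b) = \<mu> * h x"
  have "h (x + b + c) = \<mu> * h (x + c)" for x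
    using eigen[rule_format, of "x + c"] by (simp add: ac_simps)
  then show "(\<lambda>x. h (x + c)) \<in> K \<and> (\<forall>x. h (x + b + c) = \<mu> * h (x + c))"
    using assms \<open>h \<in> K\<close> by (simp add: shift_invariant_def)
qed

text \<open>\<open>poly_shift a p h\<close> is \<open>p(T\<^sub>a) h\<close>, where \<open>T\<^sub>a h = h (\<cdot> + a)\<close> is translation by \<open>a\<close>.\<close>
definition poly_shift :: "'v::real_vector \<Rightarrow> complex poly \<Rightarrow> ('v \<Rightarrow> complex) \<Rightarrow> 'v \<Rightarrow> complex" where
  "poly_shift a p h = (\<lambda>x. \<Sum>j\<le>degree p. coeff p j * h (x + real j *\<^sub>R a))"

lemma poly_shift_altdef:
  assumes "degree p \<le> N"
  shows "poly_shift a p h x = (\<Sum>j\<le>N. coeff p j * h (x + real j *\<^sub>R a))"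
  unfolding poly_shift_def using assms
  by (intro sum.mono_neutral_left) (auto simp: coeff_eq_0)

lemma poly_shift_0 [simp]: "poly_shift a 0 h = (\<lambda>x. 0)"
  by (simp add: poly_shift_def)

lemma poly_shift_1 [simp]: "poly_shift a 1 h = h"
  by (simp add: poly_shift_def fun_eq_iff)

lemma poly_shift_zero_fun [simp]: "poly_shift a p (\<lambda>x. 0) = (\<lambda>x. 0)"
  by (simp add: poly_shift_def fun_eq_iff)

lemma poly_shift_pCons: "poly_shift a (pCons c p) h x = c * h x + poly_shift a p h (x + a)"
proof -
  have "poly_shift a (pCons c p) h x = (\<Sum>j\<le>Suc (degree p). coeff (pCons c p) j * h (x + real j *\<^sub>R a))"
    by (rule poly_shift_altdef) (simp add: degree_pCons_le)
  also have "\<dots> = c * h x + (\<Sum>j\<le>degree p. coeff p j * h (x + real (Suc j) *\<^sub>R a))"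
    by (subst sum.atMost_Suc_shift) simp
  also have "(\<Sum>j\<le>degree p. coeff p j * h (x + real (Suc j) *\<^sub>R a)) = poly_shift a p h (x + a)"
    unfolding poly_shift_def by (intro sum.cong refl) (simp add: algebra_simps)
  finally show ?thesis .
qed

lemma poly_shift_linear: "poly_shift a [:- z, 1:] h = (\<lambda>x. h (x + a) - z * h x)"
  by (simp add: fun_eq_iff poly_shift_pCons)

lemma poly_shift_add: "poly_shift a (p + q) h x = poly_shift a p h x + poly_shift a q h x"
proof -
  let ?N = "max (degree p) (degree q)"
  show ?thesis
    using poly_shift_altdef[of "p + q" ?N a h x] poly_shift_altdef[of p ?N a h x]
      poly_shift_altdef[of q ?N a h x]
    by (simp add: degree_add_le sum.distrib algebra_simps)
qed

lemma poly_shift_smult: "poly_shift a (smult c p) h x = c * poly_shift a p h x"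
  using poly_shift_altdef[of "smult c p" "degree p" a h x]
  by (simp add: degree_smult_le poly_shift_def sum_distrib_left mult.assoc)

lemma poly_shift_mult: "poly_shift a (p * q) h = poly_shift a p (poly_shift a q h)"
proof (induction p rule: pCons_induct)
  case (pCons c p)
  show ?case
  proof
    fix x
    have "poly_shift a (pCons c p * q) h x = poly_shift a (smult c q + pCons 0 (p * q)) h x"
      by simp
    also have "\<dots> = c * poly_shift a q h x + poly_shift a (p * q) h (x + a)"
      by (simp add: poly_shift_add poly_shift_smult poly_shift_pCons)
    also have "\<dots> = poly_shift a (pCons c p) (poly_shift a q h) x"
      using pCons.IH by (simp add: poly_shift_pCons)
    finally show "poly_shift a (pCons c p * q) h x = poly_shift a (pCons c p) (poly_shift a q h) x" .
  qed
qed (simp add: fun_eq_iff)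

lemma poly_shift_in_subspace:
  assumes "cfun.subspace K" "shift_invariant a K" "h \<in> K"
  shows "poly_shift a p h \<in> K"
proof (induction p rule: pCons_induct)
  case 0
  then show ?case using cfun.subspace_0[OF assms(1)] by (simp add: zero_fun_def)
next
  case (pCons c p)
  have "poly_shift a (pCons c p) h = (\<lambda>x. c * h x) + (\<lambda>x. poly_shift a p h (x + a))"
    by (simp add: fun_eq_iff poly_shift_pCons)
  also have "\<dots> \<in> K"
    using assms pCons.IH
    by (intro cfun.subspace_add[OF assms(1)]) (auto simp: shift_invariant_def cfun.subspace_def)
  finally show ?case .
qed

lemma fdiff_pow_eq_poly_shift: "(fdiff a ^^ m) g = poly_shift a ([:-1, 1:] ^ m) g"
proof (induction m)
  case (Suc m)
  have "(fdiff a ^^ Suc m) g = fdiff a (poly_shift a ([:-1, 1:] ^ m) g)"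
    using Suc by simp
  also have "\<dots> = poly_shift a [:-1, 1:] (poly_shift a ([:-1, 1:] ^ m) g)"
    by (simp add: fdiff_def poly_shift_linear)
  also have "\<dots> = poly_shift a ([:-1, 1:] ^ Suc m) g"
    by (simp only: poly_shift_mult[symmetric] power_Suc)
  finally show ?case .
qed simp

lemma shift_eigenvector_exists:
  assumes K: "cfun.subspace K" "shift_invariant b K"
  shows "h \<in> K \<Longrightarrow> h \<noteq> (\<lambda>x. 0) \<Longrightarrow> p \<noteq> 0 \<Longrightarrow> poly_shift b p h = (\<lambda>x. 0) \<Longrightarrow>
      \<exists>\<mu> g. poly p \<mu> = 0 \<and> g \<in> shift_eigenspace b \<mu> K \<and> g \<noteq> (\<lambda>x. 0)"
proof (induction "degree p" arbitrary: p h rule: less_induct)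
  case (less p h)
  have "degree p \<noteq> 0"
  proof
    assume "degree p = 0"
    then obtain c where "p = [:c:]" "c \<noteq> 0" using less.prems(3) by (metis degree_eq_zeroE pCons_0_0)
    then show False using less.prems(2,4) by (simp add: fun_eq_iff poly_shift_pCons)
  qed
  then obtain z where "poly p z = 0"
    by (metis fundamental_theorem_of_algebra constant_degree)
  then obtain q where pq: "p = [:-z, 1:] * q" by (metis dvdE poly_eq_0_iff_dvd)
  with less.prems(3) have "q \<noteq> 0" by auto
  define h' where "h' = poly_shift b [:-z, 1:] h"
  show ?case
  proof (cases "h' = (\<lambda>x. 0)")
    case True
    then have "h \<in> shift_eigenspace b z K"
      using less.prems(1) by (simp add: h'_def poly_shift_linear shift_eigenspace_def fun_eq_iff)
    then show ?thesis using \<open>poly p z = 0\<close> less.prems(2) by blast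
  next
    case False
    have "h' \<in> K" unfolding h'_def by (rule poly_shift_in_subspace[OF K less.prems(1)])
    moreover have "poly_shift b q h' = (\<lambda>x. 0)"
      using less.prems(4) by (simp add: h'_def pq poly_shift_mult[symmetric] mult.commute)
    moreover have "degree q < degree p"
      unfolding pq using \<open>q \<noteq> 0\<close> by (subst degree_mult_eq) auto
    ultimately obtain \<mu> g where "poly q \<mu> = 0" "g \<in> shift_eigenspace b \<mu> K" "g \<noteq> (\<lambda>x. 0)"
      using less.hyps False \<open>q \<noteq> 0\<close> by blast
    then show ?thesis using pq by auto
  qed
qed

section \<open>Characters\<close>

definition character :: "('a::monoid_add \<Rightarrow> complex) \<Rightarrow> bool" where
  "character \<gamma> \<longleftrightarrow> \<gamma> 0 = 1 \<and> (\<forall>x y. \<gamma> (x + y) = \<gamma> x * \<gamma> y)"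

lemma characters_sum_eq_0_imp_coeffs_0:
  fixes C :: "('a::monoid_add \<Rightarrow> complex) set"
  assumes "finite C" "\<forall>\<gamma>\<in>C. character \<gamma>" "\<forall>x. (\<Sum>\<gamma>\<in>C. u \<gamma> * \<gamma> x) = 0"
  shows "\<forall>\<gamma>\<in>C. u \<gamma> = 0"
  using assms
proof (induction C arbitrary: u rule: finite_induct)
  case (insert \<delta> C)
  have \<delta>: "character \<delta>" and chars: "\<forall>\<gamma>\<in>C. character \<gamma>"
    using insert.prems by auto
  have rel: "u \<delta> * \<delta> x + (\<Sum>\<gamma>\<in>C. u \<gamma> * \<gamma> x) = 0" for x
    using insert.prems(2) insert.hyps by simp
  \<comment> \<open>Comparing the relation at \<open>x + y\<close> with \<open>\<delta> y\<close> times the relation at \<open>x\<close> eliminates \<open>\<delta>\<close>.\<close>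
  have coeffs: "\<forall>\<gamma>\<in>C. u \<gamma> * (\<gamma> y - \<delta> y) = 0" for y
  proof (rule insert.IH[OF chars], rule allI)
    fix x
    have "u \<delta> * \<delta> x * \<delta> y + (\<Sum>\<gamma>\<in>C. u \<gamma> * \<gamma> x * \<gamma> y) = 0"
      using rel[of "x + y"] \<delta> chars by (simp add: character_def mult.assoc)
    also have "0 = u \<delta> * \<delta> x * \<delta> y + (\<Sum>\<gamma>\<in>C. u \<gamma> * \<gamma> x * \<delta> y)"
      using rel[of x] by (simp add: sum_distrib_right[symmetric] distrib_right[symmetric])
    finally have "(\<Sum>\<gamma>\<in>C. u \<gamma> * \<gamma> x * \<gamma> y) - (\<Sum>\<gamma>\<in>C. u \<gamma> * \<gamma> x * \<delta> y) = 0"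
      by simp
    then show "(\<Sum>\<gamma>\<in>C. u \<gamma> * (\<gamma> y - \<delta> y) * \<gamma> x) = 0"
      by (simp add: sum_subtractf[symmetric] algebra_simps)
  qed
  have "\<forall>\<gamma>\<in>C. u \<gamma> = 0"
  proof (intro ballI)
    fix \<gamma> assume "\<gamma> \<in> C"
    then have "\<gamma> \<noteq> \<delta>" using insert.hyps(2) by auto
    then obtain y where "\<gamma> y \<noteq> \<delta> y" by (meson ext)
    then show "u \<gamma> = 0" using \<open>\<gamma> \<in> C\<close> coeffs[of y] by auto
  qed
  moreover have "u \<delta> = 0" using rel[of 0] \<delta> calculation by (simp add: character_def)
  ultimately show ?case by simp
qed simp

lemma independent_characters:
  assumes "\<forall>\<gamma>\<in>C. character \<gamma>"
  shows "cfun.independent C"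
  unfolding cfun.independent_explicit_finite_subsets
proof (intro allI impI)
  fix S u assume S: "S \<subseteq> C" "finite S" and rel: "(\<Sum>v\<in>S. (\<lambda>x. u v * v x)) = 0"
  have "(\<Sum>v\<in>S. u v * v x) = (\<Sum>v\<in>S. (\<lambda>x. u v * v x)) x" for x
    by (simp add: sum_fun_apply)
  then have "\<forall>x. (\<Sum>v\<in>S. u v * v x) = 0" by (simp add: rel)
  then show "\<forall>v\<in>S. u v = 0"
    using S assms by (intro characters_sum_eq_0_imp_coeffs_0) auto
qed

section \<open>Rotations\<close>

lemma rotation_matrix_exists:
  fixes a b :: "real^'n"
  assumes "CARD('n) \<ge> 2" "norm a = norm b"
  obtains W where "rotation_matrix W" "W *v a = b"
proof -
  obtain f where f: "orthogonal_transformation f" "det (matrix f) = 1" "f a = b"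
    using rotation_exists[OF assms] by blast
  have "(\<lambda>x. matrix f *v x) = f"
    using orthogonal_transformation_linear[OF f(1)] by simp
  then show ?thesis
    using that[of "matrix f"] f by (simp add: rotation_matrix_def orthogonal_transformation_matrix)
qed

lemma matrix_inv_orthogonal:
  fixes U :: "real^'n^'n"
  assumes "orthogonal_matrix U"
  shows "matrix_inv U = transpose U"
proof -
  have U: "U ** transpose U = mat 1" "transpose U ** U = mat 1"
    using assms by (auto simp: orthogonal_matrix_def)
  then have "\<exists>A'. U ** A' = mat 1 \<and> A' ** U = mat 1" by blast
  then have "U ** matrix_inv U = mat 1 \<and> matrix_inv U ** U = mat 1"
    unfolding matrix_inv_def by (rule someI_ex)
  then have inv: "matrix_inv U ** U = mat 1" by blast
  have "matrix_inv U = matrix_inv U ** (U ** transpose U)"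
    by (simp add: U matrix_mul_rid)
  also have "\<dots> = transpose U"
    by (simp add: matrix_mul_assoc inv matrix_mul_lid)
  finally show ?thesis .
qed

lemma radial_if_finitely_many_rotates:
  fixes f :: "real^'n \<Rightarrow> 'b::metric_space"
  assumes "CARD('n) \<ge> 2" "continuous_on UNIV f"
    and "finite ((\<lambda>W x. f (W *v x)) ` {W. rotation_matrix W})"
    and "norm c = norm a"
  shows "f c = f a"
proof -
  let ?S = "sphere (0::real^'n) (norm a)"
  have "f ` ?S \<subseteq> (\<lambda>g. g a) ` (\<lambda>W x. f (W *v x)) ` {W. rotation_matrix W}"
  proof
    fix y assume "y \<in> f ` ?S"
    then obtain c' where c': "norm c' = norm a" "y = f c'" by auto
    obtain W where "rotation_matrix W" "W *v a = c'"
      using rotation_matrix_exists[OF assms(1) c'(1)[symmetric]] .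
    with c'(2) show "y \<in> (\<lambda>g. g a) ` (\<lambda>W x. f (W *v x)) ` {W. rotation_matrix W}" by auto
  qed
  then have "finite (f ` ?S)" using assms(3) finite_subset by blast
  moreover have "connected (f ` ?S)"
  proof (rule connected_continuous_image)
    show "continuous_on ?S f" using assms(2) by (rule continuous_on_subset) simp
    show "connected ?S" using assms(1) by (intro connected_sphere) simp
  qed
  moreover have "a \<in> ?S" "c \<in> ?S" using assms(4) by auto
  ultimately obtain z where "f ` ?S = {z}" using connected_finite_iff_sing by blast
  then show ?thesis using \<open>a \<in> ?S\<close> \<open>c \<in> ?S\<close> by (metis imageI singletonD)
qed

section \<open>Polynomial functions on \<open>\<real>\<^sup>n\<close>\<close>

lemma sum_PiE_insert:
  assumes "k \<notin> S"
  shows "(\<Sum>\<beta>\<in>PiE (insert k S) T. F \<beta>) = (\<Sum>i\<in>T k. \<Sum>\<beta>\<in>PiE S T. F (\<beta>(k := i)))"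
proof -
  have "(\<Sum>\<beta>\<in>PiE (insert k S) T. F \<beta>) = (\<Sum>(i, \<beta>)\<in>T k \<times> PiE S T. F (\<beta>(k := i)))"
    unfolding PiE_insert_eq by (subst sum.reindex[OF inj_combinator[OF assms]]) (simp add: case_prod_beta')
  also have "\<dots> = (\<Sum>i\<in>T k. \<Sum>\<beta>\<in>PiE S T. F (\<beta>(k := i)))"
    by (simp add: sum.cartesian_product)
  finally show ?thesis .
qed

lemma grid_interpolation:
  fixes g :: "real^'n \<Rightarrow> complex"
  assumes along_axis: "\<And>y k. g y = (\<Sum>i<n. g (y + (real i - y$k) *\<^sub>R axis k 1) * poly (lagrange_basis n i) (of_real (y$k)))"
  shows "g x = (\<Sum>\<beta>\<in>PiE UNIV (\<lambda>_. {..<n}).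
                  g (\<chi> j. real (\<beta> j)) * (\<Prod>j\<in>UNIV. poly (lagrange_basis n (\<beta> j)) (of_real (x$j))))"
proof -
  let ?T = "\<lambda>_::'n. {..<n}"
  let ?L = "\<lambda>\<beta> S. \<Prod>j\<in>S. poly (lagrange_basis n (\<beta> j)) (of_real (x$j)) :: complex"
  define node where "node S \<beta> = (\<chi> j. if j \<in> S then real (\<beta> j) else x$j)" for S and \<beta> :: "'n \<Rightarrow> nat"
  have "g x = (\<Sum>\<beta>\<in>PiE S ?T. g (node S \<beta>) * ?L \<beta> S)" if "finite S" for S
    using that
  proof (induction S rule: finite_induct)
    case empty
    then show ?case by (simp add: node_def vec_eq_iff)
  next
    case (insert k S)
    have "g (node S \<beta>) = (\<Sum>i<n. g (node (insert k S) (\<beta>(k := i))) * poly (lagrange_basis n i) (of_real (x$k)))"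
      for \<beta>
    proof -
      have "node S \<beta> + (real i - node S \<beta> $ k) *\<^sub>R axis k 1 = node (insert k S) (\<beta>(k := i))" for i
        using insert.hyps(2) by (auto simp: node_def vec_eq_iff axis_def)
      moreover have "node S \<beta> $ k = x $ k" using insert.hyps(2) by (simp add: node_def)
      ultimately show ?thesis using along_axis[of "node S \<beta>" k] by simp
    qed
    moreover have "?L (\<beta>(k := i)) (insert k S) = poly (lagrange_basis n i) (of_real (x$k)) * ?L \<beta> S" for \<beta> i
    proof -
      have "?L (\<beta>(k := i)) S = ?L \<beta> S" using insert.hyps(2) by (intro prod.cong) auto
      then show ?thesis using insert.hyps by simp
    qed
    ultimately have "g x = (\<Sum>\<beta>\<in>PiE S ?T. \<Sum>i<n. g (node (insert k S) (\<beta>(k := i))) * ?L (\<beta>(k := i)) (insert k S))"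
      using insert.IH by (simp add: sum_distrib_left sum_distrib_right mult_ac)
    also have "\<dots> = (\<Sum>i<n. \<Sum>\<beta>\<in>PiE S ?T. g (node (insert k S) (\<beta>(k := i))) * ?L (\<beta>(k := i)) (insert k S))"
      by (rule sum.swap)
    also have "\<dots> = (\<Sum>\<beta>\<in>PiE (insert k S) ?T. g (node (insert k S) \<beta>) * ?L \<beta> (insert k S))"
      by (rule sum_PiE_insert[OF insert.hyps(2), symmetric])
    finally show ?case .
  qed
  from this[of UNIV] show ?thesis by (simp add: node_def)
qed

lemma finite_bounded_exponents: "finite {\<alpha>::'n::finite \<Rightarrow> nat. (\<Sum>i\<in>UNIV. \<alpha> i) \<le> N}"
proof (rule finite_subset)
  show "{\<alpha>::'n \<Rightarrow> nat. (\<Sum>i\<in>UNIV. \<alpha> i) \<le> N} \<subseteq> PiE UNIV (\<lambda>_. {..N})"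
  proof
    fix \<alpha> :: "'n \<Rightarrow> nat" assume "\<alpha> \<in> {\<alpha>. (\<Sum>i\<in>UNIV. \<alpha> i) \<le> N}"
    moreover have "\<alpha> i \<le> (\<Sum>i\<in>UNIV. \<alpha> i)" for i by (rule member_le_sum) auto
    ultimately show "\<alpha> \<in> PiE UNIV (\<lambda>_. {..N})" by (auto intro: order_trans)
  qed
qed (simp add: finite_PiE)

lemma poly_fun_deg_monomial:
  assumes "(\<Sum>i\<in>UNIV. \<alpha> i) \<le> N"
  shows "poly_fun_deg N (\<lambda>x::real^'n. \<Prod>i\<in>UNIV. complex_of_real (x$i ^ \<alpha> i))"
  unfolding poly_fun_deg_def
proof (intro exI allI)
  fix x :: "real^'n"
  let ?M = "\<lambda>\<alpha>. \<Prod>i\<in>UNIV. complex_of_real (x$i ^ \<alpha> i)"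
  have "(\<Sum>\<alpha>'\<in>{\<alpha>. (\<Sum>i\<in>UNIV. \<alpha> i) \<le> N}. (if \<alpha>' = \<alpha> then 1 else 0) * ?M \<alpha>')
      = (\<Sum>\<alpha>'\<in>{\<alpha>. (\<Sum>i\<in>UNIV. \<alpha> i) \<le> N}. if \<alpha>' = \<alpha> then ?M \<alpha>' else 0)"
    by (intro sum.cong) auto
  also have "\<dots> = ?M \<alpha>"
    using assms by (simp add: sum.delta[OF finite_bounded_exponents])
  finally show "?M \<alpha> = (\<Sum>\<alpha>'\<in>{\<alpha>. (\<Sum>i\<in>UNIV. \<alpha> i) \<le> N}. (if \<alpha>' = \<alpha> then 1 else 0) * ?M \<alpha>')"
    by simp
qed

lemma poly_fun_deg_cmult:
  assumes "poly_fun_deg N f"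
  shows "poly_fun_deg N (\<lambda>x. c * f x)"
proof -
  obtain d where "\<And>x. f x = (\<Sum>\<alpha>\<in>{\<alpha>. (\<Sum>i\<in>UNIV. \<alpha> i) \<le> N}. d \<alpha> * (\<Prod>i\<in>UNIV. complex_of_real (x$i ^ \<alpha> i)))"
    using assms unfolding poly_fun_deg_def by blast
  then show ?thesis
    unfolding poly_fun_deg_def
    by (intro exI[of _ "\<lambda>\<alpha>. c * d \<alpha>"]) (simp add: sum_distrib_left mult.assoc)
qed

lemma poly_fun_deg_sum:
  assumes "\<And>a. a \<in> A \<Longrightarrow> poly_fun_deg N (f a)"
  shows "poly_fun_deg N (\<lambda>x. \<Sum>a\<in>A. f a x)"
proof -
  let ?B = "{\<alpha>. (\<Sum>i\<in>UNIV. \<alpha> i) \<le> N}"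
  let ?M = "\<lambda>\<alpha> x. \<Prod>i\<in>UNIV. complex_of_real (x$i ^ \<alpha> i)"
  have "\<forall>a\<in>A. \<exists>d. \<forall>x. f a x = (\<Sum>\<alpha>\<in>?B. d \<alpha> * ?M \<alpha> x)"
    using assms unfolding poly_fun_deg_def by blast
  from bchoice[OF this]
  obtain d where d: "\<forall>a\<in>A. \<forall>x. f a x = (\<Sum>\<alpha>\<in>?B. d a \<alpha> * ?M \<alpha> x)"
    by blast
  have "(\<Sum>a\<in>A. f a x) = (\<Sum>\<alpha>\<in>?B. (\<Sum>a\<in>A. d a \<alpha>) * ?M \<alpha> x)" for x
  proof -
    have "(\<Sum>a\<in>A. f a x) = (\<Sum>a\<in>A. \<Sum>\<alpha>\<in>?B. d a \<alpha> * ?M \<alpha> x)"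
      using d by (intro sum.cong) auto
    also have "\<dots> = (\<Sum>\<alpha>\<in>?B. (\<Sum>a\<in>A. d a \<alpha>) * ?M \<alpha> x)"
      by (subst sum.swap) (simp add: sum_distrib_right)
    finally show ?thesis .
  qed
  then show ?thesis
    unfolding poly_fun_deg_def by (intro exI[of _ "\<lambda>\<alpha>. \<Sum>a\<in>A. d a \<alpha>"]) blast
qed

lemma poly_fun_deg_prod_coordinates:
  assumes "\<And>j. degree (p j) \<le> m"
  shows "poly_fun_deg (CARD('n) * m) (\<lambda>x::real^'n. \<Prod>j\<in>UNIV. poly (p j) (of_real (x$j)))"
proof -
  let ?A = "PiE UNIV (\<lambda>_::'n. {..m})"
  have poly_p: "poly (p j) z = (\<Sum>a\<le>m. coeff (p j) a * z ^ a)" for j z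
  proof -
    have "poly (p j) z = (\<Sum>a\<le>degree (p j). coeff (p j) a * z ^ a)" by (rule poly_altdef)
    also have "\<dots> = (\<Sum>a\<le>m. coeff (p j) a * z ^ a)"
      using assms[of j] by (intro sum.mono_neutral_left) (auto simp: coeff_eq_0)
    finally show ?thesis .
  qed
  have expand: "(\<Prod>j\<in>UNIV. poly (p j) (of_real (x$j))) =
      (\<Sum>\<alpha>\<in>?A. (\<Prod>j\<in>UNIV. coeff (p j) (\<alpha> j)) * (\<Prod>j\<in>UNIV. complex_of_real (x$j ^ \<alpha> j)))" for x :: "real^'n"
  proof -
    have "(\<Prod>j\<in>UNIV. poly (p j) (of_real (x$j))) = (\<Prod>j\<in>UNIV. \<Sum>a\<le>m. coeff (p j) a * of_real (x$j) ^ a)"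
      by (simp only: poly_p)
    also have "\<dots> = (\<Sum>\<alpha>\<in>?A. \<Prod>j\<in>UNIV. coeff (p j) (\<alpha> j) * of_real (x$j) ^ \<alpha> j)"
      by (rule prod_sum_PiE) auto
    also have "\<dots> = (\<Sum>\<alpha>\<in>?A. (\<Prod>j\<in>UNIV. coeff (p j) (\<alpha> j)) * (\<Prod>j\<in>UNIV. complex_of_real (x$j ^ \<alpha> j)))"
      by (simp add: prod.distrib of_real_power)
    finally show ?thesis .
  qed
  have "(\<Sum>i\<in>UNIV. \<alpha> i) \<le> CARD('n) * m" if "\<alpha> \<in> ?A" for \<alpha>
    using that sum_mono[of UNIV \<alpha> "\<lambda>_. m"] by auto
  then have "poly_fun_deg (CARD('n) * m)
      (\<lambda>x. \<Sum>\<alpha>\<in>?A. (\<Prod>j\<in>UNIV. coeff (p j) (\<alpha> j)) * (\<Prod>j\<in>UNIV. complex_of_real (x$j ^ \<alpha> j)))"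
    by (intro poly_fun_deg_sum poly_fun_deg_cmult poly_fun_deg_monomial)
  then show ?thesis by (simp only: expand)
qed

section \<open>Spaces of functions invariant under rigid motions\<close>

locale motion_invariant_space =
  fixes E :: "(real^'n \<Rightarrow> complex) set" and l :: nat
  assumes card_ge_2: "CARD('n) \<ge> 2"
    and continuous: "\<And>f. f \<in> E \<Longrightarrow> continuous_on UNIV f"
    and subspace: "cfun.subspace E"
    and spanned: "\<exists>B. finite B \<and> card B = l \<and> E \<subseteq> cfun.span B"
    and translation_invariant: "\<And>a. shift_invariant a E"
    and rotation_invariant: "\<And>f W. f \<in> E \<Longrightarrow> rotation_matrix W \<Longrightarrow> (\<lambda>x. f (W *v x)) \<in> E"
begin

lemma independent_bounded:
  assumes "cfun.independent T" "T \<subseteq> E"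
  shows "finite T \<and> card T \<le> l"
proof -
  obtain B where "finite B" "card B = l" "E \<subseteq> cfun.span B" using spanned by blast
  then show ?thesis using cfun.independent_span_bound[OF _ assms(1)] assms(2) by auto
qed

lemma exists_linear_relation:
  assumes "\<And>j. j \<le> l \<Longrightarrow> v j \<in> E"
  shows "\<exists>c. (\<exists>j\<le>l. c j \<noteq> 0) \<and> (\<forall>x. (\<Sum>j\<le>l. c j * v j x) = 0)"
proof (cases "inj_on v {..l}")
  case False
  then obtain i j where ij: "i \<le> l" "j \<le> l" "i \<noteq> j" "v i = v j"
    unfolding inj_on_def by auto
  define c where "c k = (if k = i then 1 else if k = j then -1 else (0::complex))" for k
  have "(\<Sum>k\<le>l. c k * v k x) = 0" for x
  proof -
    have "(\<Sum>k\<le>l. c k * v k x) = (\<Sum>k\<in>{i, j}. c k * v k x)"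
      using ij by (intro sum.mono_neutral_right) (auto simp: c_def)
    then show ?thesis using ij by (simp add: c_def)
  qed
  moreover have "c i \<noteq> 0" by (simp add: c_def)
  ultimately show ?thesis using ij(1) by blast
next
  case True
  let ?V = "v ` {..l}"
  have "card ?V = Suc l" using True by (simp add: card_image)
  moreover have "?V \<subseteq> E" using assms by auto
  ultimately have "\<not> cfun.independent ?V" using independent_bounded by fastforce
  then obtain u where u: "\<exists>w\<in>?V. u w \<noteq> 0" "(\<Sum>w\<in>?V. (\<lambda>x. u w * w x)) = 0"
    using cfun.dependent_finite by blast
  have "(\<Sum>j\<le>l. u (v j) * v j x) = (\<Sum>w\<in>?V. (\<lambda>x. u w * w x)) x" for x
    unfolding sum_fun_apply sum.reindex[OF True] by simp
  then show ?thesis using u by auto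
qed

lemma shift_annihilator:
  assumes "h \<in> E"
  obtains p where "p \<noteq> 0" "degree p \<le> l" "poly_shift b p h = (\<lambda>x. 0)"
proof -
  have "(\<lambda>x. h (x + real j *\<^sub>R b)) \<in> E" for j
    using translation_invariant[of "real j *\<^sub>R b"] assms unfolding shift_invariant_def by blast
  then obtain c where c: "\<exists>j\<le>l. c j \<noteq> 0" "\<forall>x. (\<Sum>j\<le>l. c j * h (x + real j *\<^sub>R b)) = 0"
    using exists_linear_relation[of "\<lambda>j x. h (x + real j *\<^sub>R b)"] by blast
  define p where "p = Poly (map c [0..<Suc l])"
  have coeff_p: "coeff p j = (if j \<le> l then c j else 0)" for j
    by (auto simp: p_def nth_default_def simp del: upt_Suc)
  have "degree p \<le> l" by (rule degree_le) (simp add: coeff_p)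
  then have "poly_shift b p h x = (\<Sum>j\<le>l. c j * h (x + real j *\<^sub>R b))" for x
    by (simp add: poly_shift_altdef coeff_p)
  with c(2) have "poly_shift b p h = (\<lambda>x. 0)" by auto
  moreover note \<open>degree p \<le> l\<close>
  moreover have "p \<noteq> 0" using c(1) coeff_p by (metis coeff_0)
  ultimately show ?thesis using that by blast
qed

lemma dim_psubset:
  assumes "K' \<subset> K" "K \<subseteq> E" "cfun.subspace K'"
  shows "cfun.dim K' < cfun.dim K"
proof -
  obtain B' where B': "B' \<subseteq> K'" "cfun.independent B'" "K' \<subseteq> cfun.span B'" "card B' = cfun.dim K'"
    using cfun.basis_exists by blast
  obtain B where B: "B \<subseteq> K" "cfun.independent B" "K \<subseteq> cfun.span B" "card B = cfun.dim K"
    using cfun.basis_exists by blast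
  obtain v where v: "v \<in> K" "v \<notin> K'" using assms(1) by blast
  have "v \<notin> cfun.span B'" using v cfun.span_minimal[OF B'(1) assms(3)] by blast
  then have "cfun.independent (insert v B')" using B'(2) by (rule cfun.independent_insertI)
  moreover have "insert v B' \<subseteq> cfun.span B" using v(1) B'(1) assms(1) B(3) by auto
  moreover have "finite B" using independent_bounded[OF B(2)] B(1) assms(2) by auto
  ultimately have "finite (insert v B') \<and> card (insert v B') \<le> card B"
    by (intro cfun.independent_span_bound)
  moreover have "v \<notin> B'" using v B'(1) by blast
  ultimately show ?thesis using B'(4) B(4) by auto
qed

lemma shift_eigenvector_if_minimal:
  assumes KE: "K \<subseteq> E" and K: "cfun.subspace K" "\<And>c. shift_invariant c K"
    and h: "h \<in> K" "h \<noteq> (\<lambda>x. 0)"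
    and minimal: "\<And>K'. K' \<subseteq> K \<Longrightarrow> cfun.subspace K' \<Longrightarrow> (\<And>c. shift_invariant c K') \<Longrightarrow>
      (\<exists>g\<in>K'. g \<noteq> (\<lambda>x. 0)) \<Longrightarrow> cfun.dim K \<le> cfun.dim K'"
  shows "\<exists>\<beta>. \<forall>x. h (x + b) = \<beta> * h x"
proof -
  obtain p where p: "p \<noteq> 0" "degree p \<le> l" "poly_shift b p h = (\<lambda>x. 0)"
    using h(1) KE by (meson shift_annihilator subsetD)
  from shift_eigenvector_exists[OF K(1,2) h p(1,3)]
  obtain \<mu> g where g: "g \<in> shift_eigenspace b \<mu> K" "g \<noteq> (\<lambda>x. 0)" by blast
  let ?K' = "shift_eigenspace b \<mu> K"
  have sub: "?K' \<subseteq> K" by (auto simp: shift_eigenspace_def)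
  have subspace_K': "cfun.subspace ?K'" using K(1) by (rule subspace_shift_eigenspace)
  \<comment> \<open>The eigenspace is again translation invariant, so by minimality it is all of \<open>K\<close>.\<close>
  have "?K' = K"
  proof (rule ccontr)
    assume "?K' \<noteq> K"
    with sub have "cfun.dim ?K' < cfun.dim K"
      by (intro dim_psubset KE subspace_K') blast
    moreover have "cfun.dim K \<le> cfun.dim ?K'"
      using g by (intro minimal sub subspace_K' shift_invariant_shift_eigenspace K(2)) blast
    ultimately show False by simp
  qed
  with h(1) show ?thesis by (auto simp: shift_eigenspace_def)
qed

lemma common_shift_eigenvector:
  assumes "g \<in> shift_eigenspace a \<zeta> E" "g \<noteq> (\<lambda>x. 0)"
  obtains h where "h \<in> shift_eigenspace a \<zeta> E" "h \<noteq> (\<lambda>x. 0)" "\<And>b. \<exists>\<beta>. \<forall>x. h (x + b) = \<beta> * h x"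
proof -
  define admissible where "admissible K \<longleftrightarrow> K \<subseteq> shift_eigenspace a \<zeta> E \<and> cfun.subspace K
      \<and> (\<forall>c. shift_invariant c K) \<and> (\<exists>h\<in>K. h \<noteq> (\<lambda>x. 0))" for K
  have "admissible (shift_eigenspace a \<zeta> E)"
    using assms subspace_shift_eigenspace[OF subspace] shift_invariant_shift_eigenspace[OF translation_invariant]
    unfolding admissible_def by blast
  then obtain K where K: "admissible K" and K_min: "\<And>K'. admissible K' \<Longrightarrow> cfun.dim K \<le> cfun.dim K'"
    using ex_has_least_nat[of admissible _ cfun.dim] by blast
  then obtain h where h: "h \<in> K" "h \<noteq> (\<lambda>x. 0)" by (auto simp: admissible_def)
  have "K \<subseteq> E" using K unfolding admissible_def shift_eigenspace_def by blast
  moreover have "cfun.dim K \<le> cfun.dim K'"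
    if "K' \<subseteq> K" "cfun.subspace K'" "\<And>c. shift_invariant c K'" "\<exists>g\<in>K'. g \<noteq> (\<lambda>x. 0)" for K'
    using K that by (intro K_min) (auto simp: admissible_def)
  ultimately have "\<exists>\<beta>. \<forall>x. h (x + b) = \<beta> * h x" for b
    using K h by (intro shift_eigenvector_if_minimal) (auto simp: admissible_def)
  moreover have "h \<in> shift_eigenspace a \<zeta> E"
    using K h unfolding admissible_def by blast
  ultimately show ?thesis using that h(2) by blast
qed

lemma character_eq_1:
  assumes "\<gamma> \<in> E" "character \<gamma>"
  shows "\<gamma> x = 1"
proof -
  let ?R = "(\<lambda>W x. \<gamma> (W *v x)) ` {W. rotation_matrix W}"
  have "?R \<subseteq> E" using rotation_invariant assms(1) by auto
  moreover have "cfun.independent ?R"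
    using assms(2) by (intro independent_characters) (auto simp: character_def matrix_vector_right_distrib)
  ultimately have "finite ?R" using independent_bounded by blast
  then have radial: "\<gamma> c = \<gamma> a" if "norm c = norm a" for a c
    using radial_if_finitely_many_rotates[OF card_ge_2 continuous[OF assms(1)]] that by blast
  have one: "\<gamma> 0 = 1" and mult: "\<gamma> (x + y) = \<gamma> x * \<gamma> y" for x y
    using assms(2) by (auto simp: character_def)
  have square: "\<gamma> y * \<gamma> y = 1" for y
  proof -
    have "\<gamma> y * \<gamma> y = \<gamma> y * \<gamma> (- y)" using radial[of "- y" y] by simp
    also have "\<dots> = 1" by (simp flip: mult add: one)
    finally show ?thesis .
  qed
  have "x = (1/2) *\<^sub>R x + (1/2) *\<^sub>R x" by (simp flip: scaleR_add_left)
  then have "\<gamma> x = \<gamma> ((1/2) *\<^sub>R x) * \<gamma> ((1/2) *\<^sub>R x)" by (metis mult)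
  then show ?thesis by (simp add: square)
qed

lemma shift_eigenvalue_eq_1:
  assumes "g \<in> shift_eigenspace a \<zeta> E" "g \<noteq> (\<lambda>x. 0)"
  shows "\<zeta> = 1"
proof -
  obtain h where h: "h \<in> shift_eigenspace a \<zeta> E" "h \<noteq> (\<lambda>x. 0)"
    and eigenvalue: "\<And>b. \<exists>\<beta>. \<forall>x. h (x + b) = \<beta> * h x"
    using common_shift_eigenvector[OF assms] by blast
  have "h 0 \<noteq> 0"
  proof
    assume "h 0 = 0"
    have "h b = 0" for b
    proof -
      obtain \<beta> where "\<forall>x. h (x + b) = \<beta> * h x" using eigenvalue by blast
      from this[rule_format, of 0] \<open>h 0 = 0\<close> show ?thesis by simp
    qed
    with h(2) show False by auto
  qed
  have shift: "h (x + b) = h b / h 0 * h x" for x b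
  proof -
    obtain \<beta> where \<beta>: "\<forall>x. h (x + b) = \<beta> * h x" using eigenvalue by blast
    from \<beta>[rule_format, of 0] \<beta>[rule_format, of x] \<open>h 0 \<noteq> 0\<close> show ?thesis by simp
  qed
  define \<gamma> where "\<gamma> = (\<lambda>x. h x / h 0)"
  have "\<gamma> \<in> E"
    using cfun.subspace_scale[OF subspace, of h "inverse (h 0)"] h(1)
    by (simp add: \<gamma>_def shift_eigenspace_def field_simps)
  moreover have "character \<gamma>"
    using \<open>h 0 \<noteq> 0\<close> by (simp add: character_def \<gamma>_def shift)
  ultimately have "h a = h 0" using character_eq_1[of \<gamma> a] \<open>h 0 \<noteq> 0\<close> by (simp add: \<gamma>_def)
  moreover have "h (0 + a) = \<zeta> * h 0" using h(1) unfolding shift_eigenspace_def by blast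
  ultimately show ?thesis using \<open>h 0 \<noteq> 0\<close> by simp
qed

lemma fdiff_pow_vanishes:
  assumes "g \<in> E"
  shows "(fdiff a ^^ l) g = (\<lambda>x. 0)"
proof -
  obtain p where p: "p \<noteq> 0" "degree p \<le> l" "poly_shift a p g = (\<lambda>x. 0)"
    using shift_annihilator[OF assms] .
  let ?m = "order 1 p"
  obtain r where pr: "p = [:-1, 1:] ^ ?m * r" and "\<not> [:-1, 1:] dvd r"
    using order_decomp[OF p(1)] by blast
  then have "poly r 1 \<noteq> 0" "r \<noteq> 0" by (auto simp: poly_eq_0_iff_dvd)
  define w where "w = poly_shift a ([:-1, 1:] ^ ?m) g"
  have "w \<in> E" unfolding w_def by (rule poly_shift_in_subspace[OF subspace translation_invariant assms])
  have "r * [:-1, 1:] ^ ?m = p" using pr by (metis mult.commute)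
  then have "poly_shift a r w = (\<lambda>x. 0)"
    using p(3) by (simp add: w_def flip: poly_shift_mult)
  \<comment> \<open>Otherwise \<open>T\<^sub>a\<close> would have an eigenvector in \<open>E\<close> whose eigenvalue is a root of \<open>r\<close>, so \<open>\<noteq> 1\<close>.\<close>
  have "w = (\<lambda>x. 0)"
  proof (rule ccontr)
    assume "w \<noteq> (\<lambda>x. 0)"
    from shift_eigenvector_exists[OF subspace translation_invariant \<open>w \<in> E\<close> this \<open>r \<noteq> 0\<close>
        \<open>poly_shift a r w = (\<lambda>x. 0)\<close>]
    obtain \<mu> g' where "poly r \<mu> = 0" "g' \<in> shift_eigenspace a \<mu> E" "g' \<noteq> (\<lambda>x. 0)" by blast
    with shift_eigenvalue_eq_1 \<open>poly r 1 \<noteq> 0\<close> show False by blast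
  qed
  have "?m \<le> l" using order_degree[OF p(1), of 1] p(2) by linarith
  then have "[:-1, 1:] ^ l = [:-1, 1:] ^ (l - ?m) * [:-1, 1:] ^ ?m"
    by (simp flip: power_add)
  then have "poly_shift a ([:-1, 1:] ^ l) g = poly_shift a ([:-1, 1:] ^ (l - ?m)) w"
    unfolding w_def by (metis poly_shift_mult)
  then show ?thesis
    by (simp add: fdiff_pow_eq_poly_shift \<open>w = (\<lambda>x. 0)\<close>)
qed

lemma interpolate_along_axis:
  assumes "g \<in> E"
  shows "g y = (\<Sum>i<l. g (y + (real i - y$k) *\<^sub>R axis k 1) * poly (lagrange_basis l i) (of_real (y$k)))"
proof -
  define \<psi> where "\<psi> t = g (y + (t - y$k) *\<^sub>R axis k 1)" for t
  have "continuous_on UNIV \<psi>" unfolding \<psi>_def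
    by (rule continuous_on_compose2[OF continuous[OF assms]]) (auto intro!: continuous_intros)
  moreover have "(fdiff h ^^ l) \<psi> = (\<lambda>t. 0)" for h
  proof -
    have "(fdiff h ^^ l) \<psi> = (\<lambda>t. (fdiff (h *\<^sub>R axis k 1) ^^ l) g (y + (t - y$k) *\<^sub>R axis k 1))"
      unfolding \<psi>_def by (rule fdiff_pow_compose) (simp add: algebra_simps)
    then show ?thesis by (simp add: fdiff_pow_vanishes[OF assms])
  qed
  ultimately have "\<psi> (y$k) = poly (interpolant l (\<lambda>i. \<psi> (real i))) (of_real (y$k))"
    by (rule fdiff_pow_eq_0_imp_poly)
  then show ?thesis by (simp add: \<psi>_def poly_interpolant)
qed

lemma poly_fun_deg_of_mem:
  assumes "g \<in> E"
  shows "poly_fun_deg (CARD('n) * l) g"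
proof -
  let ?B = "PiE UNIV (\<lambda>_::'n. {..<l})"
  have interpolation: "g = (\<lambda>x. \<Sum>\<beta>\<in>?B. g (\<chi> j. real (\<beta> j)) * (\<Prod>j\<in>UNIV. poly (lagrange_basis l (\<beta> j)) (of_real (x$j))))"
    by (rule ext, rule grid_interpolation) (rule interpolate_along_axis[OF assms])
  have "poly_fun_deg (CARD('n) * l)
      (\<lambda>x. \<Sum>\<beta>\<in>?B. g (\<chi> j. real (\<beta> j)) * (\<Prod>j\<in>UNIV. poly (lagrange_basis l (\<beta> j)) (of_real (x$j))))"
  proof (intro poly_fun_deg_sum poly_fun_deg_cmult poly_fun_deg_prod_coordinates)
    fix \<beta> j assume "\<beta> \<in> ?B"
    then have "\<beta> j < l" by auto
    from degree_lagrange_basis[where 'a=complex, OF this]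
    show "degree (lagrange_basis l (\<beta> j) :: complex poly) \<le> l" by simp
  qed
  then show ?thesis by (subst interpolation)
qed

end

lemma subspace_if_csubspace_fun: "csubspace_fun E \<Longrightarrow> cfun.subspace E"
  unfolding csubspace_fun_def cfun.subspace_def by (simp add: zero_fun_def plus_fun_def)

lemma cspan_fun_subset_span: "cspan_fun B \<subseteq> cfun.span B"
proof
  fix f assume "f \<in> cspan_fun B"
  then obtain c where "f = (\<lambda>x. \<Sum>b\<in>B. c b * b x)" by (auto simp: cspan_fun_def)
  also have "\<dots> = (\<Sum>b\<in>B. (\<lambda>x. c b * b x))" by (simp add: fun_eq_iff sum_fun_apply)
  also have "\<dots> \<in> cfun.span B"
    by (intro cfun.span_sum cfun.span_scale[of _ B, simplified] cfun.span_base)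
  finally show "f \<in> cfun.span B" .
qed

definition rotation_invariant_translates :: "(real^'n \<Rightarrow> complex) set \<Rightarrow> bool" where
  "rotation_invariant_translates E \<longleftrightarrow> (\<forall>a::real^'n. \<forall>g\<in>translate_set a E. \<forall>U::real^'n^'n.
      rotation_matrix U \<longrightarrow> (\<lambda>x. g (matrix_inv U *v x)) \<in> translate_set a E)"

lemma rotate_mem_if_rotation_invariant_translates:
  assumes "rotation_invariant_translates E" "f \<in> E" "rotation_matrix W"
  shows "(\<lambda>x. f (W *v x)) \<in> E"
proof -
  have "rotation_matrix (transpose W)" "matrix_inv (transpose W) = W"
    using assms(3) by (simp_all add: rotation_matrix_def det_transpose matrix_inv_orthogonal)
  moreover have "translate_set 0 E = E" by (simp add: translate_set_def)
  ultimately show ?thesis using assms(1,2) unfolding rotation_invariant_translates_def by metis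
qed

lemma shift_invariant_if_rotation_invariant_translates:
  fixes E :: "(real^'n \<Rightarrow> complex) set"
  assumes card: "CARD('n) \<ge> 2" and invariant: "rotation_invariant_translates E"
  shows "shift_invariant a E"
proof -
  \<comment> \<open>A rotation \<open>M\<close> with \<open>M c = -c\<close> acting on the translate \<open>E\<^sub>c\<close> turns \<open>f\<close> into \<open>f (M \<cdot> + 2c)\<close>.\<close>
  have "(\<lambda>x. f (x + 2 *\<^sub>R c)) \<in> E" if "f \<in> E" for f and c :: "real^'n"
  proof -
    obtain M where M: "rotation_matrix M" "M *v c = - c"
      using rotation_matrix_exists[OF card, of c "- c"] by auto
    have "rotation_matrix (transpose M)" "matrix_inv (transpose M) = M"
      using M(1) by (simp_all add: rotation_matrix_def det_transpose matrix_inv_orthogonal)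
    moreover have "(\<lambda>x. f (x + c)) \<in> translate_set c E" using that by (auto simp: translate_set_def)
    ultimately have "(\<lambda>x. f (M *v x + c)) \<in> translate_set c E"
      using invariant unfolding rotation_invariant_translates_def by fastforce
    then obtain h where "h \<in> E" and h: "\<And>x. f (M *v x + c) = h (x + c)"
      by (auto simp: translate_set_def fun_eq_iff)
    have "h y = f (M *v y + 2 *\<^sub>R c)" for y
      using h[of "y - c"] by (simp add: matrix_vector_mult_diff_distrib M(2) scaleR_2 algebra_simps)
    moreover have "M *v (transpose M *v x) = x" for x
    proof -
      have "M ** transpose M = mat 1" using M(1) by (simp add: rotation_matrix_def orthogonal_matrix_def)
      then show ?thesis by (metis matrix_vector_mul_assoc matrix_vector_mul_lid)
    qed
    ultimately have "(\<lambda>x. h (transpose M *v x)) = (\<lambda>x. f (x + 2 *\<^sub>R c))" by simp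
    then show ?thesis
      using rotate_mem_if_rotation_invariant_translates[OF invariant \<open>h \<in> E\<close> \<open>rotation_matrix (transpose M)\<close>]
      by simp
  qed
  from this[of _ "(1/2) *\<^sub>R a"] show ?thesis unfolding shift_invariant_def by simp
qed

lemma motion_invariant_spaceI:
  fixes E :: "(real^'n \<Rightarrow> complex) set"
  assumes "CARD('n) \<ge> 2" "\<forall>f\<in>E. continuous_on UNIV f" "csubspace_fun E" "cdim_fun E l"
    and "rotation_invariant_translates E"
  shows "motion_invariant_space E l"
proof
  obtain B where "finite B" "card B = l" "cspan_fun B = E"
    using assms(4) by (auto simp: cdim_fun_def)
  then show "\<exists>B. finite B \<and> card B = l \<and> E \<subseteq> cfun.span B"
    using cspan_fun_subset_span by blast
qed (use assms subspace_if_csubspace_fun rotate_mem_if_rotation_invariant_translates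
      shift_invariant_if_rotation_invariant_translates in auto)

theorem lemma4p11:
  fixes E :: "(real^'n \<Rightarrow> complex) set" and l :: nat
  assumes "CARD('n) \<ge> 2"
    and "\<forall>f\<in>E. continuous_on UNIV f"
    and "csubspace_fun E"
    and "cdim_fun E l"
    and "\<forall>a::real^'n. \<forall>g\<in>translate_set a E. \<forall>U::real^'n^'n. rotation_matrix U \<longrightarrow>
           (\<lambda>x. g (matrix_inv U *v x)) \<in> translate_set a E"
  shows "\<forall>f\<in>E. poly_fun_deg (CARD('n) * l) f"
proof -
  have "rotation_invariant_translates E"
    using assms(5) unfolding rotation_invariant_translates_def .
  then interpret motion_invariant_space E l
    by (rule motion_invariant_spaceI[OF assms(1-4)])
  show ?thesis using poly_fun_deg_of_mem by blast
qed

end
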